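(* Let $\rho\ge1$, $P_2>0$, and for $i=1,\dots,\rho$ let $0<\alpha_i<1$ and $\beta_i>0$. For $\xi>0$ define $$\varphi_i(\xi)=\max\Big(0,\;\frac{\alpha_i}{2}-1+\sqrt{\frac{\alpha_i^2}{4}+\frac{\alpha_i}{\beta_i}\xi}\Big),\qquad i=1,\dots,\rho.$$ Then the equation $P_2=\sum_{i=1}^{\rho}\beta_i\varphi_i(\xi)$ has a unique solution $\xi>0$, and for this $\xi$ the vector $x_i=\varphi_i(\xi)$, $i=1,\dots,\rho$, is an optimal solution of the convex problem $$\min_{x_1,\dots,x_\rho}\;-\sum_{i=1}^{\rho}\ln\Big\{1-\frac{\alpha_i}{1+x_i}\Big\}\quad\text{s.t.}\quad\sum_{i=1}^{\rho}\beta_i x_i\le P_2,\ \ x_i\ge0,\ i=1,\dots,\rho.$$ *)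

theory Defs
  imports Complex_Main
begin

definition phi :: "real \<Rightarrow> real \<Rightarrow> real \<Rightarrow> real" where
  "phi a b \<xi> = max 0 (a / 2 - 1 + sqrt (a\<^sup>2 / 4 + (a / b) * \<xi>))"

definition objective :: "nat \<Rightarrow> (nat \<Rightarrow> real) \<Rightarrow> (nat \<Rightarrow> real) \<Rightarrow> real" where
  "objective \<rho> \<alpha> x = - (\<Sum>i=1..\<rho>. ln (1 - \<alpha> i / (1 + x i)))"

definition feasible :: "nat \<Rightarrow> (nat \<Rightarrow> real) \<Rightarrow> real \<Rightarrow> (nat \<Rightarrow> real) \<Rightarrow> bool" where
  "feasible \<rho> \<beta> P2 x \<longleftrightarrow> (\<Sum>i=1..\<rho>. \<beta> i * x i) \<le> P2 \<and> (\<forall>i\<in>{1..\<rho>}. x i \<ge> 0)"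

end

theory Submission
  imports Defs
begin

text \<open>
  Each summand \<open>-ln (1 - \<alpha>\<^sub>i / (1 + x\<^sub>i))\<close> is convex and decreasing in \<open>x\<^sub>i\<close>, with marginal
  gain \<open>\<alpha>\<^sub>i / ((1 + x\<^sub>i) (1 + x\<^sub>i - \<alpha>\<^sub>i))\<close>. The allocation \<open>\<phi>\<^sub>i(\<xi>)\<close> is water-filling with
  water level \<open>\<xi>\<close>: it solves \<open>(1 + x) (1 + x - \<alpha>\<^sub>i) = \<alpha>\<^sub>i \<xi> / \<beta>\<^sub>i\<close> when that root is positive and
  is \<open>0\<close> otherwise, so the marginal gain equals \<open>\<beta>\<^sub>i / \<xi>\<close> on active coordinates and is at most
  \<open>\<beta>\<^sub>i / \<xi>\<close> on inactive ones. These are the KKT conditions with multiplier \<open>1 / \<xi>\<close>; summing the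
  tangent-line inequalities of the summands proves optimality once the budget is exhausted.
  The spent budget \<open>\<Sum>\<^sub>i \<beta>\<^sub>i \<phi>\<^sub>i(\<xi>)\<close> is continuous, vanishes at \<open>0\<close>, is unbounded, and
  increases strictly wherever it is positive, so it takes the value \<open>P\<^sub>2\<close> exactly once.
\<close>

lemma neg_ln_one_minus_div_tangent:
  fixes a u v :: real
  assumes "0 \<le> a" "a < u" "a < v"
  shows "- ln (1 - a / u) - a / (u * (u - a)) * (v - u) \<le> - ln (1 - a / v)"
proof -
  have u: "0 < u" "0 < 1 - a / u" and v: "0 < v" "0 < 1 - a / v"
    using assms by (auto simp: field_simps)
  define z where "z = (1 - a / u) / (1 - a / v)"
  have "0 < z" using u v by (simp add: z_def)
  have "1 - 1 / z \<le> ln z"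
    using ln_le_minus_one[of "1 / z"] \<open>0 < z\<close> by (simp add: ln_div)
  moreover have "ln z = ln (1 - a / u) - ln (1 - a / v)"
    using u v by (simp add: z_def ln_div)
  moreover have "1 - 1 / z = a * (u - v) / (v * (u - a))"
    using assms u v by (simp add: z_def field_simps)
  moreover have "a * (u - v) / (v * (u - a)) + a / (u * (u - a)) * (v - u)
      = a * (u - v)\<^sup>2 / (u * v * (u - a))"
    using assms u v by (simp add: divide_simps power2_eq_square) algebra
  moreover have "0 \<le> a * (u - v)\<^sup>2 / (u * v * (u - a))"
    using assms u v by simp
  ultimately show ?thesis by linarith
qed

lemma phi_nonneg: "0 \<le> phi a b \<xi>"
  by (simp add: phi_def)

lemma phi_at_zero: "0 \<le> a \<Longrightarrow> a \<le> 1 \<Longrightarrow> phi a b 0 = 0"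
  by (simp add: phi_def real_sqrt_divide max_def)

lemma continuous_on_phi: "continuous_on S (phi a b)"
  unfolding phi_def by (intro continuous_intros)

lemma phi_mono:
  assumes "0 \<le> a" "0 \<le> b" "\<xi>\<^sub>1 \<le> \<xi>\<^sub>2"
  shows "phi a b \<xi>\<^sub>1 \<le> phi a b \<xi>\<^sub>2"
proof -
  have "a / b * \<xi>\<^sub>1 \<le> a / b * \<xi>\<^sub>2" using assms by (intro mult_left_mono) auto
  then show ?thesis unfolding phi_def by (intro max.mono) auto
qed

lemma phi_strict_mono:
  assumes "0 < a" "0 < b" "\<xi>\<^sub>1 < \<xi>\<^sub>2" "0 < phi a b \<xi>\<^sub>1"
  shows "phi a b \<xi>\<^sub>1 < phi a b \<xi>\<^sub>2"
proof -
  have "a / b * \<xi>\<^sub>1 < a / b * \<xi>\<^sub>2" using assms by (intro mult_strict_left_mono) auto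
  then have "sqrt (a\<^sup>2 / 4 + a / b * \<xi>\<^sub>1) < sqrt (a\<^sup>2 / 4 + a / b * \<xi>\<^sub>2)" by simp
  then show ?thesis using assms(4) unfolding phi_def by linarith
qed

lemma phi_unbounded:
  assumes "0 < a" "0 < b"
  shows "P \<le> b * phi a b (b * (1 + P / b)\<^sup>2 / a)"
proof -
  have "1 + P / b \<le> sqrt (a\<^sup>2 / 4 + a / b * (b * (1 + P / b)\<^sup>2 / a))"
    using assms by (intro real_le_rsqrt) simp
  then have "P / b \<le> phi a b (b * (1 + P / b)\<^sup>2 / a)" using assms unfolding phi_def by auto
  then show ?thesis using assms by (simp add: field_simps)
qed

text \<open>Complementary slackness: the marginal gain at \<open>x = phi a b \<xi>\<close> equals \<open>b / \<xi>\<close> if \<open>0 < x\<close>,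
  and if \<open>x = 0\<close> it is only bounded by \<open>b / \<xi>\<close>, which suffices because then \<open>0 \<le> y - x\<close>.\<close>
lemma phi_marginal_le:
  fixes a b \<xi> y :: real
  defines "x \<equiv> phi a b \<xi>"
  assumes "0 < a" "a < 1" "0 < b" "0 < \<xi>" "0 \<le> y"
  shows "a / ((1 + x) * (1 + x - a)) * (y - x) \<le> b / \<xi> * (y - x)"
proof -
  define s where "s = sqrt (a\<^sup>2 / 4 + a / b * \<xi>)"
  have "0 \<le> s" using assms by (simp add: s_def)
  have s2: "s\<^sup>2 = a\<^sup>2 / 4 + a / b * \<xi>"
    unfolding s_def using assms by (intro real_sqrt_pow2) simp
  show ?thesis
  proof (cases "0 < x")
    case True
    then have "x = a / 2 - 1 + s" by (simp add: x_def phi_def s_def)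
    then have "(1 + x) * (1 + x - a) = s\<^sup>2 - a\<^sup>2 / 4"
      by (simp add: power2_eq_square algebra_simps)
    then have "a / ((1 + x) * (1 + x - a)) = b / \<xi>" using s2 assms by simp
    then show ?thesis by simp
  next
    case False
    then have "x = 0" using phi_nonneg[of a b \<xi>] by (simp add: x_def)
    then have "s \<le> 1 - a / 2" by (simp add: x_def phi_def s_def)
    then have "s\<^sup>2 \<le> (1 - a / 2)\<^sup>2" using \<open>0 \<le> s\<close> by (intro power_mono) auto
    then have "a / b * \<xi> \<le> 1 - a" using s2 by (simp add: power2_eq_square algebra_simps)
    then have "a * \<xi> \<le> b * (1 - a)" using assms by (simp add: field_simps)
    then have "a / (1 - a) \<le> b / \<xi>" using assms by (simp add: field_simps)
    then show ?thesis using \<open>x = 0\<close> assms by (intro mult_right_mono) auto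
  qed
qed

lemma neg_ln_phi_supporting_line:
  assumes "0 < a" "a < 1" "0 < b" "0 < \<xi>" "0 \<le> y"
  shows "- ln (1 - a / (1 + phi a b \<xi>)) - b / \<xi> * (y - phi a b \<xi>) \<le> - ln (1 - a / (1 + y))"
  using neg_ln_one_minus_div_tangent[of a "1 + phi a b \<xi>" "1 + y"]
    phi_marginal_le[OF assms] phi_nonneg[of a b \<xi>] assms
  by (simp add: algebra_simps)

definition phi_cost :: "'i set \<Rightarrow> ('i \<Rightarrow> real) \<Rightarrow> ('i \<Rightarrow> real) \<Rightarrow> real \<Rightarrow> real" where
  "phi_cost I \<alpha> \<beta> \<xi> = (\<Sum>i\<in>I. \<beta> i * phi (\<alpha> i) (\<beta> i) \<xi>)"

locale water_filling =
  fixes I :: "'i set" and \<alpha> \<beta> :: "'i \<Rightarrow> real"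
  assumes finite_I: "finite I"
    and \<alpha>_pos: "\<And>i. i \<in> I \<Longrightarrow> 0 < \<alpha> i" and \<alpha>_less_1: "\<And>i. i \<in> I \<Longrightarrow> \<alpha> i < 1"
    and \<beta>_pos: "\<And>i. i \<in> I \<Longrightarrow> 0 < \<beta> i"
begin

lemma phi_cost_zero: "phi_cost I \<alpha> \<beta> 0 = 0"
  using \<alpha>_pos \<alpha>_less_1 by (simp add: phi_cost_def phi_at_zero less_imp_le)

lemma continuous_on_phi_cost: "continuous_on S (phi_cost I \<alpha> \<beta>)"
  unfolding phi_cost_def by (intro continuous_intros continuous_on_phi)

lemma phi_cost_strict_mono:
  assumes "\<xi>\<^sub>1 < \<xi>\<^sub>2" "0 < phi_cost I \<alpha> \<beta> \<xi>\<^sub>1"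
  shows "phi_cost I \<alpha> \<beta> \<xi>\<^sub>1 < phi_cost I \<alpha> \<beta> \<xi>\<^sub>2"
proof -
  obtain j where j: "j \<in> I" "0 < phi (\<alpha> j) (\<beta> j) \<xi>\<^sub>1"
    using assms(2) phi_nonneg unfolding phi_cost_def
    by (metis (no_types, lifting) mult_eq_0_iff order_less_le sum.neutral)
  show ?thesis
    unfolding phi_cost_def
  proof (rule sum_strict_mono_ex1[OF finite_I])
    show "\<forall>i\<in>I. \<beta> i * phi (\<alpha> i) (\<beta> i) \<xi>\<^sub>1 \<le> \<beta> i * phi (\<alpha> i) (\<beta> i) \<xi>\<^sub>2"
      using \<alpha>_pos \<beta>_pos assms(1) by (auto intro!: mult_left_mono phi_mono simp: less_imp_le)
    show "\<exists>i\<in>I. \<beta> i * phi (\<alpha> i) (\<beta> i) \<xi>\<^sub>1 < \<beta> i * phi (\<alpha> i) (\<beta> i) \<xi>\<^sub>2"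
      using j \<alpha>_pos \<beta>_pos assms(1)
      by (intro bexI[OF _ \<open>j \<in> I\<close>] mult_strict_left_mono phi_strict_mono) auto
  qed
qed

lemma phi_cost_unbounded:
  assumes "I \<noteq> {}"
  obtains M where "0 \<le> M" "P \<le> phi_cost I \<alpha> \<beta> M"
proof -
  obtain j where "j \<in> I" using assms by blast
  define M where "M = \<beta> j * (1 + P / \<beta> j)\<^sup>2 / \<alpha> j"
  have "0 \<le> M" using \<alpha>_pos[OF \<open>j \<in> I\<close>] \<beta>_pos[OF \<open>j \<in> I\<close>] by (simp add: M_def)
  have "P \<le> \<beta> j * phi (\<alpha> j) (\<beta> j) M"
    unfolding M_def using \<alpha>_pos \<beta>_pos \<open>j \<in> I\<close> by (intro phi_unbounded)
  also have "\<dots> \<le> phi_cost I \<alpha> \<beta> M"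
    unfolding phi_cost_def using finite_I \<open>j \<in> I\<close> \<beta>_pos phi_nonneg
    by (intro member_le_sum) (auto simp: less_imp_le)
  finally show thesis using that \<open>0 \<le> M\<close> by blast
qed

lemma ex1_phi_cost_eq:
  assumes "I \<noteq> {}" "0 < P"
  shows "\<exists>!\<xi>. 0 < \<xi> \<and> P = phi_cost I \<alpha> \<beta> \<xi>"
proof -
  obtain M where "0 \<le> M" "P \<le> phi_cost I \<alpha> \<beta> M"
    using phi_cost_unbounded[OF assms(1)] .
  then obtain \<xi> where "0 \<le> \<xi>" and \<xi>: "phi_cost I \<alpha> \<beta> \<xi> = P"
    using IVT'[of "phi_cost I \<alpha> \<beta>" 0 P M] phi_cost_zero continuous_on_phi_cost assms(2)
    by auto
  have "\<xi> \<noteq> 0" using phi_cost_zero \<xi> assms(2) by auto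
  have "\<eta> = \<xi>" if \<eta>: "0 < \<eta>" "P = phi_cost I \<alpha> \<beta> \<eta>" for \<eta>
  proof (rule ccontr)
    assume "\<eta> \<noteq> \<xi>"
    then consider "\<eta> < \<xi>" | "\<xi> < \<eta>" by linarith
    then show False
    proof cases
      case 1
      then have "phi_cost I \<alpha> \<beta> \<eta> < phi_cost I \<alpha> \<beta> \<xi>"
        using \<eta> assms(2) by (intro phi_cost_strict_mono) auto
      then show False using \<eta> \<xi> by simp
    next
      case 2
      then have "phi_cost I \<alpha> \<beta> \<xi> < phi_cost I \<alpha> \<beta> \<eta>"
        using \<xi> assms(2) by (intro phi_cost_strict_mono) auto
      then show False using \<eta> \<xi> by simp
    qed
  qed
  then show ?thesis using \<open>0 \<le> \<xi>\<close> \<open>\<xi> \<noteq> 0\<close> \<xi> by (intro ex1I[of _ \<xi>]) auto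
qed

lemma phi_minimizes_neg_ln_sum:
  assumes "0 < \<xi>" "\<And>i. i \<in> I \<Longrightarrow> 0 \<le> y i" "(\<Sum>i\<in>I. \<beta> i * y i) \<le> phi_cost I \<alpha> \<beta> \<xi>"
  shows "(\<Sum>i\<in>I. - ln (1 - \<alpha> i / (1 + phi (\<alpha> i) (\<beta> i) \<xi>)))
    \<le> (\<Sum>i\<in>I. - ln (1 - \<alpha> i / (1 + y i)))"
proof -
  let ?x = "\<lambda>i. phi (\<alpha> i) (\<beta> i) \<xi>"
  have "((\<Sum>i\<in>I. \<beta> i * y i) - phi_cost I \<alpha> \<beta> \<xi>) / \<xi> \<le> 0"
    using assms(1,3) by (intro divide_nonpos_pos) auto
  then have "(\<Sum>i\<in>I. - ln (1 - \<alpha> i / (1 + ?x i)))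
      \<le> (\<Sum>i\<in>I. - ln (1 - \<alpha> i / (1 + ?x i))) - ((\<Sum>i\<in>I. \<beta> i * y i) - phi_cost I \<alpha> \<beta> \<xi>) / \<xi>"
    by linarith
  also have "\<dots> = (\<Sum>i\<in>I. - ln (1 - \<alpha> i / (1 + ?x i)) - \<beta> i / \<xi> * (y i - ?x i))"
    by (simp add: phi_cost_def sum_subtractf sum_divide_distrib right_diff_distrib diff_divide_distrib)
  also have "\<dots> \<le> (\<Sum>i\<in>I. - ln (1 - \<alpha> i / (1 + y i)))"
    using assms(1,2) \<alpha>_pos \<alpha>_less_1 \<beta>_pos by (intro sum_mono neg_ln_phi_supporting_line) auto
  finally show ?thesis .
qed

end

theorem mainTheorem3:
  fixes \<rho> :: nat and P2 :: real and \<alpha> \<beta> :: "nat \<Rightarrow> real"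
  assumes "\<rho> \<ge> 1" and "P2 > 0"
    and "\<And>i. i \<in> {1..\<rho>} \<Longrightarrow> 0 < \<alpha> i \<and> \<alpha> i < 1"
    and "\<And>i. i \<in> {1..\<rho>} \<Longrightarrow> \<beta> i > 0"
  shows "(\<exists>!\<xi>. \<xi> > 0 \<and> P2 = (\<Sum>i=1..\<rho>. \<beta> i * phi (\<alpha> i) (\<beta> i) \<xi>))
       \<and> (\<forall>\<xi>. \<xi> > 0 \<and> P2 = (\<Sum>i=1..\<rho>. \<beta> i * phi (\<alpha> i) (\<beta> i) \<xi>) \<longrightarrow>
           (feasible \<rho> \<beta> P2 (\<lambda>i. phi (\<alpha> i) (\<beta> i) \<xi>) \<and>
           (\<forall>y. feasible \<rho> \<beta> P2 y \<longrightarrow>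
              objective \<rho> \<alpha> (\<lambda>i. phi (\<alpha> i) (\<beta> i) \<xi>) \<le> objective \<rho> \<alpha> y)))"
proof -
  interpret water_filling "{1..\<rho>}" \<alpha> \<beta>
    using assms(3,4) by unfold_locales auto
  have "{1..\<rho>} \<noteq> {}" using assms(1) by simp
  have optimal: "feasible \<rho> \<beta> P2 (\<lambda>i. phi (\<alpha> i) (\<beta> i) \<xi>) \<and>
      (\<forall>y. feasible \<rho> \<beta> P2 y \<longrightarrow>
        objective \<rho> \<alpha> (\<lambda>i. phi (\<alpha> i) (\<beta> i) \<xi>) \<le> objective \<rho> \<alpha> y)"
    if "0 < \<xi>" "P2 = phi_cost {1..\<rho>} \<alpha> \<beta> \<xi>" for \<xi>
    using phi_minimizes_neg_ln_sum[OF \<open>0 < \<xi>\<close>] that phi_nonneg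
    unfolding objective_def feasible_def phi_cost_def by (simp add: sum_negf)
  show ?thesis
    using ex1_phi_cost_eq[OF \<open>{1..\<rho>} \<noteq> {}\<close> assms(2)] optimal
    unfolding phi_cost_def by blast
qed

end
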